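(* Let $q$ be a prime power, $n$ a positive integer, $L(x)=\sum_{i=0}^{n-1}a_ix^{q^{2i}}$ with $a_i\in\mathbb F_{q^{2n}}$, and suppose $\sigma_L$ is $\lambda$-Hermitian for some $\lambda\in\mathbb F_{q^2}$. Let $r=n-\dim\ker L$, and for $c\in\mathbb F_{q^2}$ let $N_c$ be the number of $u\in\mathbb F_{q^{2n}}$ with $\mathrm{Tr}(uL(u^q))+c=0$. Then \[N_c=\begin{cases}q^{2n-1}+(-1)^r(q-1)q^{2n-r-1}&\text{if }c=0,\\ q^{2n-1}+(-1)^{r-1}q^{2n-r-1}&\text{if }c^{q-1}=\lambda,\\ 0&\text{otherwise.}\end{cases}\]
   Context: $\mathrm{Tr}$ is the trace $\mathbb F_{q^{2n}}\to\mathbb F_{q^2}$ and $\sigma_L(u,v)=\mathrm{Tr}(uL(v^q))$. For a sesquilinear form $\sigma$, $\sigma^*(u,v)=\sigma(v,u)^q$, and $\sigma$ is $\lambda$-Hermitian if $\sigma^*=\lambda\sigma$. $\ker L$ is the kernel of the induced $\mathbb F_{q^2}$-linear map on $\mathbb F_{q^{2n}}$, dimension over $\mathbb F_{q^2}$. *)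

theory Defs
  imports "HOL-Computational_Algebra.Primes"
begin

text \<open>The field F_{q^{2n}} is modelled as a finite field type 'a with CARD('a) = q^(2n).
  Frobenius is x \<mapsto> x^q; the subfield F_{q^2} is {x. x^(q^2) = x}.\<close>

definition prime_power :: "nat \<Rightarrow> bool" where
  "prime_power q \<longleftrightarrow> (\<exists>p k. prime p \<and> k > 0 \<and> q = p ^ k)"

definition subfield_q2 :: "nat \<Rightarrow> 'a::field set" where
  "subfield_q2 q = {x. x ^ (q^2) = x}"

definition trace_rel :: "nat \<Rightarrow> nat \<Rightarrow> 'a::field \<Rightarrow> 'a" where
  "trace_rel q n x = (\<Sum>i<n. x ^ (q ^ (2*i)))"

definition linpoly :: "nat \<Rightarrow> nat \<Rightarrow> (nat \<Rightarrow> 'a::field) \<Rightarrow> 'a \<Rightarrow> 'a" where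
  "linpoly q n a x = (\<Sum>i<n. a i * x ^ (q ^ (2*i)))"

definition sigma_L :: "nat \<Rightarrow> nat \<Rightarrow> (nat \<Rightarrow> 'a::field) \<Rightarrow> 'a \<Rightarrow> 'a \<Rightarrow> 'a" where
  "sigma_L q n a u v = trace_rel q n (u * linpoly q n a (v ^ q))"

definition is_hermitian :: "nat \<Rightarrow> ('a::field \<Rightarrow> 'a \<Rightarrow> 'a) \<Rightarrow> 'a \<Rightarrow> bool" where
  "is_hermitian q \<sigma> lam \<longleftrightarrow> (\<forall>u v. (\<sigma> v u) ^ q = lam * \<sigma> u v)"

definition ker_L :: "nat \<Rightarrow> nat \<Rightarrow> (nat \<Rightarrow> 'a::field) \<Rightarrow> 'a set" where
  "ker_L q n a = {x. linpoly q n a x = 0}"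

definition dim_q2 :: "nat \<Rightarrow> 'a set \<Rightarrow> nat" where
  "dim_q2 q V = (THE d. card V = (q^2) ^ d)"

end

theory Submission
  imports Defs "HOL-Number_Theory.Residues" "HOL-Computational_Algebra.Polynomial"
begin

text \<open>
  \<open>\<sigma>\<^sub>L\<close> is a \<open>\<lambda>\<close>-Hermitian form over \<open>K = F\<^sub>q\<^sub>2\<close> whose radical is the preimage of
  \<open>ker L\<close> under the Frobenius map, so it has rank \<open>r\<close>. The number of solutions of
  \<open>\<sigma>(u,u) + c = 0\<close> is computed by induction on the rank. Since \<open>K \<noteq> F\<^sub>q\<close>, a form that
  does not vanish on a subspace \<open>W\<close> has an anisotropic vector \<open>u\<^sub>0 \<in> W\<close>. Then
  \<open>W = K u\<^sub>0 \<oplus> u\<^sub>0\<^sup>\<perp>\<close> with the same radical, and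
  \<open>\<sigma>(b u\<^sub>0 + w, b u\<^sub>0 + w) = N(b) \<sigma>(u\<^sub>0,u\<^sub>0) + \<sigma>(w,w)\<close> for the norm
  \<open>N(b) = b\<^sup>q\<^sup>+\<^sup>1\<close>. The norm maps \<open>K\<^sup>*\<close> onto \<open>F\<^sub>q\<^sup>*\<close> with fibres of size \<open>q + 1\<close>, and the
  count on \<open>u\<^sub>0\<^sup>\<perp>\<close> for the shifted constant \<open>x = c + N(b) \<sigma>(u\<^sub>0,u\<^sub>0)\<close> depends only on
  whether \<open>x = 0\<close>, \<open>x\<^sup>q = \<lambda> x\<close>, or neither; summing over \<open>b \<in> K\<close> gives the recursion.
\<close>

section \<open>Finite fields\<close>

text \<open>The library's \<open>finite_field_power_card_eq_same\<close> needs the sort \<open>finite_field\<close>.\<close>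
lemma field_power_card_eq_same:
  fixes x :: "'a::{field,finite}"
  shows "x ^ card (UNIV :: 'a set) = x"
proof (cases "x = 0")
  case False
  define G :: "'a monoid" where "G = \<lparr>carrier = UNIV - {0::'a}, monoid.mult = (*), one = 1\<rparr>"
  interpret group G
    by (rule groupI) (auto simp: G_def mult.assoc intro!: bexI[of _ "inverse _"])
  have pow: "y [^]\<^bsub>G\<^esub> k = y ^ k" for y :: 'a and k
    by (induction k) (simp_all add: G_def)
  have unit: "x ^ (card (UNIV :: 'a set) - 1) = 1"
  proof -
    have "x [^]\<^bsub>G\<^esub> Coset.order G = \<one>\<^bsub>G\<^esub>"
      using False by (intro pow_order_eq_1) (simp add: G_def)
    moreover have "Coset.order G = card (UNIV :: 'a set) - 1"
      by (simp add: Coset.order_def G_def card_Diff_singleton)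
    moreover have "\<one>\<^bsub>G\<^esub> = 1"
      by (simp add: G_def)
    ultimately show ?thesis
      by (simp only: pow)
  qed
  have "x ^ card (UNIV :: 'a set) = x ^ Suc (card (UNIV :: 'a set) - 1)"
    using finite_UNIV_card_ge_0[where 'a='a] by simp
  also have "\<dots> = x"
    by (simp only: power_Suc unit mult_1_right)
  finally show ?thesis .
qed (simp add: power_0_left)

lemma card_power_eq_le:
  fixes t :: "'a::idom"
  assumes "k > 0"
  shows "card {x. x ^ k = t} \<le> k"
proof -
  define P where "P = monom 1 k - [:t:]"
  have "coeff P k = 1"
    using assms by (simp add: P_def coeff_pCons split: nat.split)
  then have "P \<noteq> 0"
    by auto
  moreover have "degree P \<le> k"
    unfolding P_def by (rule order.trans[OF degree_diff_le_max]) (simp add: degree_monom_le)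
  moreover have "{x. x ^ k = t} = {x. poly P x = 0}"
    by (simp add: P_def poly_monom)
  ultimately show ?thesis
    using card_poly_roots_bound by fastforce
qed

lemma card_fibre_eq_if_card_ge:
  assumes "finite A" "finite B" "f ` A \<subseteq> B" "d * card B \<le> card A"
    and fibre_le: "\<And>y. y \<in> B \<Longrightarrow> card {x \<in> A. f x = y} \<le> d"
    and "y \<in> B"
  shows "card {x \<in> A. f x = y} = d"
proof -
  have "(\<Union>y\<in>B. {x \<in> A. f x = y}) = A"
    using assms(3) by blast
  moreover have "card (\<Union>y\<in>B. {x \<in> A. f x = y}) = (\<Sum>y\<in>B. card {x \<in> A. f x = y})"
    using assms(1,2) by (intro card_UN_disjoint) auto
  ultimately have "card A = (\<Sum>y\<in>B. card {x \<in> A. f x = y})"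
    by simp
  also have "\<dots> \<le> (\<Sum>y\<in>B. d)"
    by (rule sum_mono) (rule fibre_le)
  finally have "(\<Sum>y\<in>B. card {x \<in> A. f x = y}) = (\<Sum>y\<in>B. d)"
    using assms(4) \<open>card A = _\<close> by (simp add: mult.commute)
  from sum_mono_inv[OF this fibre_le assms(6,2)] show ?thesis .
qed

lemma minus_one_dvd_power_minus_one: "(Q - 1) dvd (Q ^ k - 1 :: nat)"
proof (cases "Q = 0")
  case False
  have "[Q = 1] (mod Q - 1)"
    using False by (simp add: cong_def mod_if)
  then have "[Q ^ k = 1] (mod Q - 1)"
    using cong_pow[of Q 1 "Q - 1" k] by simp
  then show ?thesis
    by (rule cong_to_1_nat)
qed (simp add: power_0_left)

lemma card_roots_of_unity:
  assumes "d > 0" "d dvd card (UNIV :: 'a::{field,finite} set) - 1"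
  shows "card {x :: 'a. x ^ d = 1} = d"
proof -
  obtain e where e: "card (UNIV :: 'a set) - 1 = d * e"
    using assms(2) by blast
  have "card {0, 1 :: 'a} \<le> card (UNIV :: 'a set)"
    by (rule card_mono) auto
  then have e_pos: "e > 0"
    using e by (cases e) auto
  have card_UNIV: "card (UNIV :: 'a set) = Suc (d * e)"
    using e finite_UNIV_card_ge_0[where ?'a = 'a, OF finite_UNIV] by linarith
  let ?A = "UNIV - {0 :: 'a}" and ?B = "{y :: 'a. y ^ e = 1}"
  have "(\<lambda>x. x ^ d) ` ?A \<subseteq> ?B"
  proof clarify
    fix x :: 'a assume "x \<noteq> 0"
    have "x * (x ^ d) ^ e = x"
      using field_power_card_eq_same[of x] card_UNIV by (simp add: power_mult)
    with \<open>x \<noteq> 0\<close> show "(x ^ d) ^ e = 1"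
      by simp
  qed
  moreover have "d * card ?B \<le> card ?A"
    using card_power_eq_le[OF e_pos, of "1 :: 'a"] e by (simp add: card_Diff_singleton)
  moreover have "card {x \<in> ?A. x ^ d = y} \<le> d" for y
    using card_power_eq_le[OF assms(1), of y] by (rule order.trans[rotated]) (auto intro: card_mono)
  moreover have "(1::'a) \<in> ?B"
    by simp
  ultimately have "card {x \<in> ?A. x ^ d = 1} = d"
    by (intro card_fibre_eq_if_card_ge) auto
  moreover have "{x \<in> ?A. x ^ d = 1} = {x. x ^ d = 1}"
    using assms(1) by (auto simp: power_0_left)
  ultimately show ?thesis
    by simp
qed

lemma card_power_fixed_points:
  assumes "1 < Q" "(Q - 1) dvd card (UNIV :: 'a::{field,finite} set) - 1"
  shows "card {x :: 'a. x ^ Q = x} = Q"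
proof -
  obtain Q' where Q': "Q = Suc Q'"
    using assms(1) by (cases Q) auto
  have "{x :: 'a. x ^ Q = x} = insert 0 {x. x ^ (Q - 1) = 1}"
    unfolding Q' by (auto simp: power_0_left)
  moreover have "0 \<notin> {x :: 'a. x ^ (Q - 1) = 1}"
    using assms(1) by (simp add: power_0_left)
  ultimately show ?thesis
    using card_roots_of_unity[OF _ assms(2)] assms(1) by simp
qed

lemma prime_power_eq_CHAR_power:
  assumes "prime_power q" "card (UNIV :: 'a::{field,finite} set) = q ^ m"
  shows "\<exists>k. q = CHAR('a) ^ k"
proof -
  obtain p k where p: "prime p" "q = p ^ k"
    using assms(1) unfolding prime_power_def by blast
  have "prime CHAR('a)"
    by (simp add: prime_CHAR_semidom finite_imp_CHAR_pos)
  moreover have "CHAR('a) dvd p ^ (k * m)"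
    using CHAR_dvd_CARD[where 'a='a] assms(2) p(2) by (simp add: power_mult)
  ultimately have "CHAR('a) = p"
    using p(1) prime_dvd_power primes_dvd_imp_eq by blast
  then show ?thesis
    using p(2) by blast
qed

section \<open>A field of order \<open>q^(2n)\<close> and its subfield \<open>F\<^sub>q\<^sub>2\<close>\<close>

locale field_q2n =
  fixes q n :: nat and field_type :: "'a::{field,finite} itself"
  assumes prime_power_q: "prime_power q" and n_pos: "n > 0"
    and card_field: "card (UNIV :: 'a set) = q ^ (2*n)"
begin

abbreviation K :: "'a set" where "K \<equiv> subfield_q2 q"

lemma q_ge_2: "q \<ge> 2"
proof -
  obtain p k where "prime p" "k > 0" "q = p ^ k"
    using prime_power_q unfolding prime_power_def by blast
  then show ?thesis
    using prime_ge_2_nat[of p] power_increasing[of 1 k p] by simp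
qed

lemma power_q_power_add: "(x + y :: 'a) ^ (q ^ j) = x ^ (q ^ j) + y ^ (q ^ j)"
  and power_q_power_sum: "(\<Sum>i\<in>A. f i :: 'a) ^ (q ^ j) = (\<Sum>i\<in>A. f i ^ (q ^ j))"
proof -
  obtain k where k: "q = CHAR('a) ^ k"
    using prime_power_eq_CHAR_power[OF prime_power_q card_field] by blast
  have "prime CHAR('a)"
    by (simp add: prime_CHAR_semidom finite_imp_CHAR_pos)
  then show "(x + y) ^ (q ^ j) = x ^ (q ^ j) + y ^ (q ^ j)"
    and "(\<Sum>i\<in>A. f i) ^ (q ^ j) = (\<Sum>i\<in>A. f i ^ (q ^ j))"
    by (simp_all add: freshmans_dream' freshmans_dream_sum' k flip: power_mult)
qed

lemma power_q_power_minus: "(- x :: 'a) ^ (q ^ j) = - (x ^ (q ^ j))"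
proof -
  have "x ^ (q ^ j) + (- x) ^ (q ^ j) = 0"
    using power_q_power_add[of x "- x" j] q_ge_2 by (simp add: power_0_left)
  then show ?thesis
    by (simp add: eq_neg_iff_add_eq_0 add.commute)
qed

lemma power_q_add: "(x + y :: 'a) ^ q = x ^ q + y ^ q"
  and power_q_minus: "(- x :: 'a) ^ q = - (x ^ q)"
  using power_q_power_add[of x y 1] power_q_power_minus[of x 1] by simp_all

lemma inj_power_q: "inj (\<lambda>x :: 'a. x ^ q)"
proof (rule injI)
  fix x y :: 'a
  assume "x ^ q = y ^ q"
  then have "(x - y) ^ q = 0"
    using power_q_add[of x "- y"] power_q_minus[of y] by simp
  then show "x = y"
    by simp
qed

lemma card_subfield_q2: "card K = q ^ 2"
  and card_fixed_power_q: "card {x :: 'a. x ^ q = x} = q"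
proof -
  have "1 < q ^ j" "(q ^ j - 1) dvd card (UNIV :: 'a set) - 1" if j_dvd: "j dvd 2 * n" and j_pos: "j > 0" for j
  proof -
    show "1 < q ^ j"
      using q_ge_2 j_pos by (intro one_less_power) auto
    obtain k where "2 * n = j * k"
      using j_dvd by blast
    then show "(q ^ j - 1) dvd card (UNIV :: 'a set) - 1"
      using minus_one_dvd_power_minus_one[of "q ^ j" k] by (simp add: card_field power_mult)
  qed
  from this[of 2] this[of 1] show "card K = q ^ 2" "card {x :: 'a. x ^ q = x} = q"
    using card_power_fixed_points[of "q ^ 2"] card_power_fixed_points[of "q ^ 1"]
    by (simp_all add: subfield_q2_def)
qed

lemma subfield_q2_power_q_power:
  assumes "x \<in> K"
  shows "x ^ (q ^ (2*i)) = x"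
proof (induction i)
  case (Suc i)
  have "x ^ (q ^ (2 * Suc i)) = (x ^ (q ^ (2*i))) ^ (q ^ 2)"
    by (simp add: power_mult[symmetric] power_add[symmetric])
  then show ?case
    using Suc assms by (simp add: subfield_q2_def)
qed simp

lemma subfield_q2_zero [simp]: "0 \<in> K"
  and subfield_q2_one [simp]: "1 \<in> K"
  using q_ge_2 by (simp_all add: subfield_q2_def power_0_left)

lemma subfield_q2_add: "x \<in> K \<Longrightarrow> y \<in> K \<Longrightarrow> x + y \<in> K"
  and subfield_q2_uminus: "x \<in> K \<Longrightarrow> - x \<in> K"
  and subfield_q2_mult: "x \<in> K \<Longrightarrow> y \<in> K \<Longrightarrow> x * y \<in> K"
  and subfield_q2_inverse: "x \<in> K \<Longrightarrow> inverse x \<in> K"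
  using power_q_power_add[of x y 2] power_q_power_minus[of x 2]
  by (simp_all add: subfield_q2_def power_mult_distrib power_inverse)

lemma subfield_q2_diff: "x \<in> K \<Longrightarrow> y \<in> K \<Longrightarrow> x - y \<in> K"
  and subfield_q2_divide: "x \<in> K \<Longrightarrow> y \<in> K \<Longrightarrow> x / y \<in> K"
  using subfield_q2_add[of x "- y"] subfield_q2_uminus[of y]
    subfield_q2_mult[of x "inverse y"] subfield_q2_inverse[of y]
  by (simp_all add: divide_inverse)

lemma subfield_q2_power_q_power_q: "x \<in> K \<Longrightarrow> (x ^ q) ^ q = x"
  by (simp add: subfield_q2_def power2_eq_square flip: power_mult)

lemma subfield_q2_power_q:
  assumes "x \<in> K"
  shows "x ^ q \<in> K"
proof -
  have "(x ^ q) ^ (q ^ 2) = (x ^ (q ^ 2)) ^ q"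
    by (simp add: mult.commute flip: power_mult)
  then show ?thesis
    using assms by (simp add: subfield_q2_def)
qed

lemma norm_power_q: "x \<in> K \<Longrightarrow> (x ^ (q + 1)) ^ q = x ^ (q + 1)"
  using subfield_q2_power_q_power_q[of x] by (simp add: power_add power_mult_distrib)

lemma card_norm_fibre:
  assumes "t ^ q = t" "t \<noteq> 0"
  shows "card {b \<in> K. b ^ (q + 1) = t} = q + 1"
proof -
  let ?A = "K - {0}" and ?B = "{y :: 'a. y ^ q = y} - {0}"
  have "(\<lambda>b. b ^ (q + 1)) ` ?A \<subseteq> ?B"
    using norm_power_q by auto
  moreover have "card ?A = (q + 1) * card ?B"
    using card_subfield_q2 card_fixed_power_q q_ge_2
    by (simp add: card_Diff_singleton power_0_left power2_eq_square algebra_simps)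
  moreover have "card {b \<in> ?A. b ^ (q + 1) = y} \<le> q + 1" for y
    using card_power_eq_le[of "q + 1" y] by (rule order.trans[rotated]) (auto intro: card_mono)
  ultimately have "card {b \<in> ?A. b ^ (q + 1) = t} = q + 1"
    using assms by (intro card_fibre_eq_if_card_ge) auto
  moreover have "{b \<in> ?A. b ^ (q + 1) = t} = {b \<in> K. b ^ (q + 1) = t}"
    using assms(2) by auto
  ultimately show ?thesis
    by simp
qed

lemma ex_subfield_q2_power_q_neq: "\<exists>a\<in>K. a ^ q \<noteq> a"
proof (rule ccontr)
  assume "\<not> ?thesis"
  then have "card K \<le> card {x :: 'a. x ^ q = x}"
    by (intro card_mono) auto
  then show False
    using card_subfield_q2 card_fixed_power_q q_ge_2 by (simp add: power2_eq_square)
qed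

lemma card_norm_equation:
  assumes "a \<noteq> 0" "a ^ q = lam * a"
  shows "card {b \<in> K. c + b ^ (q + 1) * a = 0} =
    (if c = 0 then 1 else if c ^ q = lam * c then q + 1 else 0)"
proof -
  have lam: "lam \<noteq> 0"
    using assms by auto
  define t where "t = - c / a"
  have eq_t: "c + b ^ (q + 1) * a = 0 \<longleftrightarrow> b ^ (q + 1) = t" for b
    using assms(1) by (auto simp: t_def add_eq_0_iff field_simps)
  have t_fixed: "t ^ q = t \<longleftrightarrow> c ^ q = lam * c"
    using assms lam by (auto simp: t_def power_q_minus power_divide field_simps)
  show ?thesis
  proof (cases "c = 0")
    case True
    then have "{b \<in> K. c + b ^ (q + 1) * a = 0} = {0}"
      using assms(1) by auto
    then show ?thesis
      using True by simp
  next
    case False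
    then have "t \<noteq> 0"
      using assms(1) by (simp add: t_def)
    moreover have "{b \<in> K. c + b ^ (q + 1) * a = 0} = {b \<in> K. b ^ (q + 1) = t}"
      using eq_t by blast
    moreover have "{b \<in> K. b ^ (q + 1) = t} = {}" if "t ^ q \<noteq> t"
      using norm_power_q that by auto
    ultimately show ?thesis
      using False t_fixed card_norm_fibre[of t] by auto
  qed
qed

definition K_subspace :: "'a set \<Rightarrow> bool" where
  "K_subspace W \<longleftrightarrow> 0 \<in> W \<and> (\<forall>u\<in>W. \<forall>v\<in>W. u + v \<in> W) \<and> (\<forall>a\<in>K. \<forall>u\<in>W. a * u \<in> W)"

lemma K_subspace_zero: "K_subspace W \<Longrightarrow> 0 \<in> W"
  and K_subspace_add: "K_subspace W \<Longrightarrow> u \<in> W \<Longrightarrow> v \<in> W \<Longrightarrow> u + v \<in> W"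
  and K_subspace_mult: "K_subspace W \<Longrightarrow> a \<in> K \<Longrightarrow> u \<in> W \<Longrightarrow> a * u \<in> W"
  by (simp_all add: K_subspace_def)

lemma K_subspace_diff: "K_subspace W \<Longrightarrow> u \<in> W \<Longrightarrow> v \<in> W \<Longrightarrow> u - v \<in> W"
  using K_subspace_add[of W u "(- 1) * v"] K_subspace_mult[of W "- 1" v]
  by (simp add: subfield_q2_uminus)

lemma inj_on_K_line_plus:
  assumes "K_subspace T" "s \<notin> T"
  shows "inj_on (\<lambda>(a, t). a * s + t) (K \<times> T)"
proof (rule inj_onI, clarify)
  fix a t b t'
  assume ab: "a \<in> K" "t \<in> T" "b \<in> K" "t' \<in> T" and eq: "a * s + t = b * s + t'"
  show "a = b \<and> t = t'"
  proof (cases "a = b")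
    case False
    then have "s = inverse (a - b) * (t' - t)"
      using eq by (simp add: field_simps)
    then have "s \<in> T"
      using ab assms(1)
      by (simp add: K_subspace_mult K_subspace_diff subfield_q2_inverse subfield_q2_diff)
    with assms(2) show ?thesis
      by simp
  qed (use eq in simp)
qed

lemma K_subspace_extend:
  assumes S: "K_subspace S" and T: "K_subspace T" "T \<subseteq> S" and s: "s \<in> S" "s \<notin> T"
  obtains T' where "K_subspace T'" "T \<subset> T'" "T' \<subseteq> S" "card T' = q ^ 2 * card T"
proof
  let ?f = "\<lambda>(a, t). a * s + t"
  let ?T' = "?f ` (K \<times> T)"
  show "card ?T' = q ^ 2 * card T"
    using card_image[OF inj_on_K_line_plus[OF T(1) s(2)]] card_subfield_q2
    by (simp add: card_cartesian_product)
  show "K_subspace ?T'"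
    unfolding K_subspace_def
  proof (intro conjI ballI)
    show "0 \<in> ?T'"
      using K_subspace_zero[OF T(1)] by (force intro: image_eqI[of _ _ "(0, 0)"])
  next
    fix u v assume "u \<in> ?T'" "v \<in> ?T'"
    then obtain a t b t' where "a \<in> K" "t \<in> T" "b \<in> K" "t' \<in> T" "u = a * s + t" "v = b * s + t'"
      by auto
    then show "u + v \<in> ?T'"
      by (intro image_eqI[of _ _ "(a + b, t + t')"])
        (auto simp: algebra_simps subfield_q2_add K_subspace_add[OF T(1)])
  next
    fix c u assume "c \<in> K" "u \<in> ?T'"
    then obtain a t where "a \<in> K" "t \<in> T" "u = a * s + t"
      by auto
    with \<open>c \<in> K\<close> show "c * u \<in> ?T'"
      by (intro image_eqI[of _ _ "(c * a, c * t)"])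
        (auto simp: algebra_simps subfield_q2_mult K_subspace_mult[OF T(1)])
  qed
  have "T \<subseteq> ?T'"
    by (force intro: image_eqI[of _ _ "(0, _)"])
  moreover have "s \<in> ?T'"
    using K_subspace_zero[OF T(1)] by (force intro: image_eqI[of _ _ "(1, 0)"])
  ultimately show "T \<subset> ?T'"
    using s(2) by blast
  show "?T' \<subseteq> S"
    using S T(2) s(1) by (auto simp: K_subspace_add K_subspace_mult)
qed

lemma card_K_subspace_relative:
  assumes "K_subspace S" "K_subspace T" "T \<subseteq> S"
  shows "\<exists>d. card S = q ^ (2*d) * card T"
  using assms(2,3)
proof (induction "card S - card T" arbitrary: T rule: less_induct)
  case less
  show ?case
  proof (cases "T = S")
    case False
    then obtain s where "s \<in> S" "s \<notin> T"
      using less.prems(2) by blast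
    then obtain T' where T': "K_subspace T'" "T \<subset> T'" "T' \<subseteq> S" "card T' = q ^ 2 * card T"
      using K_subspace_extend assms(1) less.prems by metis
    have "card T < card T'"
      using T'(2) by (simp add: psubset_card_mono)
    moreover have "card T' \<le> card S"
      using T'(3) by (simp add: card_mono)
    ultimately obtain d where "card S = q ^ (2*d) * card T'"
      using less.hyps[OF _ T'(1,3)] by (metis diff_less_mono2 order.strict_trans2)
    then show ?thesis
      using T'(4) by (intro exI[of _ "Suc d"]) (simp add: power_mult power2_eq_square)
  qed (auto intro: exI[of _ 0])
qed

lemma card_K_subspace: "K_subspace W \<Longrightarrow> \<exists>d. card W = q ^ (2*d)"
  using card_K_subspace_relative[of W "{0}"] by (simp add: K_subspace_def K_subspace_zero)

lemma trace_rel_add: "trace_rel q n (x + y) = trace_rel q n x + trace_rel q n (y :: 'a)"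
  by (simp add: trace_rel_def power_q_power_add sum.distrib)

lemma trace_rel_mult_subfield: "b \<in> K \<Longrightarrow> trace_rel q n (b * x) = b * trace_rel q n (x :: 'a)"
  by (simp add: trace_rel_def power_mult_distrib subfield_q2_power_q_power sum_distrib_left)

lemma trace_rel_in_subfield: "trace_rel q n (x :: 'a) \<in> K"
proof -
  let ?f = "\<lambda>i. x ^ (q ^ (2*i))"
  have "?f n = ?f 0"
    using field_power_card_eq_same[of x] by (simp add: card_field)
  have "trace_rel q n x ^ (q ^ 2) = (\<Sum>i<n. ?f i ^ (q ^ 2))"
    by (simp add: trace_rel_def power_q_power_sum)
  also have "\<dots> = (\<Sum>i<n. ?f (Suc i))"
    by (simp add: power2_eq_square mult_ac flip: power_mult)
  also have "\<dots> = (\<Sum>i<n. ?f i)"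
    using sum.lessThan_Suc_shift[of ?f n] \<open>?f n = ?f 0\<close> by (simp add: add.commute)
  finally show ?thesis
    by (simp add: subfield_q2_def trace_rel_def)
qed

text \<open>\<open>u \<mapsto> Tr (u y)\<close> is a polynomial of degree
  \<open>q^(2n-2) < q^(2n)\<close> with linear coefficient \<open>y\<close>.\<close>
lemma trace_rel_nondegenerate:
  assumes "\<And>u. trace_rel q n (u * y) = (0 :: 'a)"
  shows "y = 0"
proof (rule ccontr)
  assume "y \<noteq> 0"
  define P where "P = (\<Sum>i<n. monom (y ^ (q ^ (2*i))) (q ^ (2*i)))"
  have "q ^ (2*i) \<noteq> 1" if "i > 0" for i
    using q_ge_2 that one_less_power[of q "2*i"] by simp
  then have "coeff P 1 = (\<Sum>i<n. if i = 0 then y else 0)"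
    unfolding P_def coeff_sum by (intro sum.cong) (auto simp: coeff_monom)
  also have "\<dots> = y"
    using n_pos by simp
  finally have "P \<noteq> 0"
    using \<open>y \<noteq> 0\<close> by auto
  moreover have "degree P \<le> q ^ (2*(n-1))"
    unfolding P_def
  proof (rule degree_sum_le)
    fix i assume "i \<in> {..<n}"
    then have "q ^ (2*i) \<le> q ^ (2*(n-1))"
      using q_ge_2 by (intro power_increasing) auto
    then show "degree (monom (y ^ (q ^ (2*i))) (q ^ (2*i))) \<le> q ^ (2*(n-1))"
      using degree_monom_le order.trans by blast
  qed simp
  moreover have "{u. poly P u = 0} = UNIV"
    using assms by (simp add: P_def trace_rel_def poly_sum poly_monom power_mult_distrib mult_ac)
  ultimately have "card (UNIV :: 'a set) \<le> q ^ (2*(n-1))"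
    using card_poly_roots_bound[of P] by simp
  moreover have "q ^ (2*(n-1)) < q ^ (2*n)"
    using q_ge_2 n_pos by (intro power_strict_increasing) auto
  ultimately show False
    using card_field by simp
qed

lemma linpoly_add: "linpoly q n c (x + y) = linpoly q n c x + linpoly q n c (y :: 'a)"
  by (simp add: linpoly_def power_q_power_add sum.distrib distrib_left)

lemma linpoly_mult_subfield: "b \<in> K \<Longrightarrow> linpoly q n c (b * x) = b * linpoly q n c (x :: 'a)"
  by (simp add: linpoly_def sum_distrib_left power_mult_distrib subfield_q2_power_q_power
      mult.left_commute)

end

section \<open>Hermitian forms\<close>

definition radical :: "('a \<Rightarrow> 'a \<Rightarrow> 'b::zero) \<Rightarrow> 'a set \<Rightarrow> 'a set" where
  "radical \<sigma> W = {v \<in> W. \<forall>u\<in>W. \<sigma> u v = 0}"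

locale hermitian_form = field_q2n q n field_type
  for q n :: nat and field_type :: "'a::{field,finite} itself" +
  fixes \<sigma> :: "'a \<Rightarrow> 'a \<Rightarrow> 'a" and lam :: 'a
  assumes add_left: "\<sigma> (u + u') v = \<sigma> u v + \<sigma> u' v"
    and add_right: "\<sigma> u (v + v') = \<sigma> u v + \<sigma> u v'"
    and mult_left: "b \<in> K \<Longrightarrow> \<sigma> (b * u) v = b * \<sigma> u v"
    and mult_right: "b \<in> K \<Longrightarrow> \<sigma> u (b * v) = b ^ q * \<sigma> u v"
    and hermitian: "\<sigma> v u ^ q = lam * \<sigma> u v"
    and form_in_subfield: "\<sigma> u v \<in> K"
begin

lemma form_zero_left [simp]: "\<sigma> 0 v = 0"
  and form_zero_right [simp]: "\<sigma> u 0 = 0"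
  using add_left[of 0 0 v] add_right[of u 0 0] by (metis add_0 add_cancel_right_right)+

lemma form_diff_left: "\<sigma> (u - u') v = \<sigma> u v - \<sigma> u' v"
  using add_left[of u "(- 1) * u'" v] mult_left[of "- 1" u' v] subfield_q2_uminus[of 1]
  by simp

lemma form_eq_0_commute: "\<sigma> v u = 0 \<Longrightarrow> \<sigma> u v = 0"
  using hermitian[of u v] q_ge_2 by (simp add: power_0_left)

definition orth :: "'a set \<Rightarrow> 'a \<Rightarrow> 'a set" where
  "orth W u\<^sub>0 = {w \<in> W. \<sigma> w u\<^sub>0 = 0}"

text \<open>If \<open>\<sigma> x x = 0\<close> on \<open>W\<close>, expanding \<open>\<sigma>(u + a v, u + a v)\<close> gives
  \<open>a\<^sup>q \<sigma> u v = a \<sigma> u v\<close> for all \<open>a \<in> K\<close>, i.e.\ \<open>K \<subseteq> F\<^sub>q\<close>.\<close>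
lemma ex_anisotropic:
  assumes W: "K_subspace W" and uv: "u \<in> W" "v \<in> W" "\<sigma> u v \<noteq> 0"
  shows "\<exists>u\<^sub>0\<in>W. \<sigma> u\<^sub>0 u\<^sub>0 \<noteq> 0"
proof (rule ccontr)
  assume "\<not> ?thesis"
  then have iso: "\<sigma> x x = 0" if "x \<in> W" for x
    using that by blast
  have key: "a ^ q * \<sigma> u v + a * \<sigma> v u = 0" if a: "a \<in> K" for a
  proof -
    have "u + a * v \<in> W"
      using W uv a by (simp add: K_subspace_add K_subspace_mult)
    then have "0 = \<sigma> (u + a * v) (u + a * v)"
      using iso by simp
    also have "\<dots> = a ^ q * \<sigma> u v + a * \<sigma> v u"
      using iso[OF uv(1)] iso[OF uv(2)] a
      by (simp add: add_left add_right mult_left mult_right)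
    finally show ?thesis
      by simp
  qed
  obtain a where "a \<in> K" "a ^ q \<noteq> a"
    using ex_subfield_q2_power_q_neq by blast
  moreover have "\<sigma> v u = - \<sigma> u v"
    using key[of 1] by (simp add: eq_neg_iff_add_eq_0 add.commute)
  ultimately show False
    using key[of a] uv(3) by (simp add: algebra_simps)
qed

lemma form_diag_add_orth:
  assumes "b \<in> K" "\<sigma> w u\<^sub>0 = 0"
  shows "\<sigma> (b * u\<^sub>0 + w) (b * u\<^sub>0 + w) = b ^ (q + 1) * \<sigma> u\<^sub>0 u\<^sub>0 + \<sigma> w w"
  using assms form_eq_0_commute[OF assms(2)]
  by (simp add: add_left add_right mult_left mult_right algebra_simps power_add)

lemma K_subspace_orth: "K_subspace W \<Longrightarrow> K_subspace (orth W u\<^sub>0)"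
  by (auto simp: K_subspace_def orth_def add_left mult_left)

lemma bij_betw_orth_decomp:
  assumes W: "K_subspace W" and u\<^sub>0: "u\<^sub>0 \<in> W" "\<sigma> u\<^sub>0 u\<^sub>0 \<noteq> 0"
  shows "bij_betw (\<lambda>(b, w). b * u\<^sub>0 + w) (K \<times> orth W u\<^sub>0) W"
proof (rule bij_betwI')
  have coord: "\<sigma> (b * u\<^sub>0 + w) u\<^sub>0 = b * \<sigma> u\<^sub>0 u\<^sub>0" if "b \<in> K" "w \<in> orth W u\<^sub>0" for b w
    using that by (simp add: orth_def add_left mult_left)
  fix x y
  assume x: "x \<in> K \<times> orth W u\<^sub>0" and y: "y \<in> K \<times> orth W u\<^sub>0"
  show "((\<lambda>(b, w). b * u\<^sub>0 + w) x = (\<lambda>(b, w). b * u\<^sub>0 + w) y) = (x = y)"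
  proof
    obtain b w b' w' where xy: "x = (b, w)" "y = (b', w')"
      by (cases x, cases y)
    assume eq: "(\<lambda>(b, w). b * u\<^sub>0 + w) x = (\<lambda>(b, w). b * u\<^sub>0 + w) y"
    then have "\<sigma> (b * u\<^sub>0 + w) u\<^sub>0 = \<sigma> (b' * u\<^sub>0 + w') u\<^sub>0"
      using xy by simp
    then have "b * \<sigma> u\<^sub>0 u\<^sub>0 = b' * \<sigma> u\<^sub>0 u\<^sub>0"
      using coord x y xy by simp
    then have "b = b'"
      using u\<^sub>0(2) by simp
    then show "x = y"
      using eq xy by simp
  qed simp
next
  fix x
  assume "x \<in> K \<times> orth W u\<^sub>0"
  then show "(\<lambda>(b, w). b * u\<^sub>0 + w) x \<in> W"
    using W u\<^sub>0(1) by (auto simp: orth_def K_subspace_add K_subspace_mult)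
next
  fix y
  assume y: "y \<in> W"
  define b where "b = \<sigma> y u\<^sub>0 / \<sigma> u\<^sub>0 u\<^sub>0"
  have "b \<in> K"
    by (simp add: b_def subfield_q2_divide form_in_subfield)
  moreover have "y - b * u\<^sub>0 \<in> W"
    using W y u\<^sub>0(1) \<open>b \<in> K\<close> by (simp add: K_subspace_diff K_subspace_mult)
  moreover have "\<sigma> (y - b * u\<^sub>0) u\<^sub>0 = \<sigma> y u\<^sub>0 - b * \<sigma> u\<^sub>0 u\<^sub>0"
    using \<open>b \<in> K\<close> by (simp add: form_diff_left mult_left)
  then have "\<sigma> (y - b * u\<^sub>0) u\<^sub>0 = 0"
    using u\<^sub>0(2) by (simp add: b_def)
  ultimately show "\<exists>x\<in>K \<times> orth W u\<^sub>0. y = (\<lambda>(b, w). b * u\<^sub>0 + w) x"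
    by (intro bexI[of _ "(b, y - b * u\<^sub>0)"]) (auto simp: orth_def)
qed

lemma radical_orth:
  assumes W: "K_subspace W" and u\<^sub>0: "u\<^sub>0 \<in> W" "\<sigma> u\<^sub>0 u\<^sub>0 \<noteq> 0"
  shows "radical \<sigma> (orth W u\<^sub>0) = radical \<sigma> W"
proof (intro equalityI subsetI)
  fix x
  assume x: "x \<in> radical \<sigma> (orth W u\<^sub>0)"
  have "\<sigma> y x = 0" if "y \<in> W" for y
  proof -
    have "y \<in> (\<lambda>(b, w). b * u\<^sub>0 + w) ` (K \<times> orth W u\<^sub>0)"
      using bij_betw_imp_surj_on[OF bij_betw_orth_decomp[OF assms]] \<open>y \<in> W\<close> by simp
    then obtain b w where "b \<in> K" "w \<in> orth W u\<^sub>0" "y = b * u\<^sub>0 + w"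
      by auto
    moreover have "\<sigma> u\<^sub>0 x = 0"
      using x form_eq_0_commute by (auto simp: radical_def orth_def)
    ultimately show ?thesis
      using x by (simp add: radical_def add_left mult_left)
  qed
  then show "x \<in> radical \<sigma> W"
    using x by (auto simp: radical_def orth_def)
next
  fix x
  assume "x \<in> radical \<sigma> W"
  then show "x \<in> radical \<sigma> (orth W u\<^sub>0)"
    using u\<^sub>0(1) form_eq_0_commute by (auto simp: radical_def orth_def)
qed

lemma card_level_set_orth_decomp:
  assumes W: "K_subspace W" and u\<^sub>0: "u\<^sub>0 \<in> W" "\<sigma> u\<^sub>0 u\<^sub>0 \<noteq> 0"
  shows "card {u \<in> W. \<sigma> u u + c = 0} =
    (\<Sum>b\<in>K. card {w \<in> orth W u\<^sub>0. \<sigma> w w + (c + b ^ (q + 1) * \<sigma> u\<^sub>0 u\<^sub>0) = 0})"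
proof -
  define f where "f = (\<lambda>(b, w). b * u\<^sub>0 + w)"
  let ?S = "SIGMA b:K. {w \<in> orth W u\<^sub>0. \<sigma> w w + (c + b ^ (q + 1) * \<sigma> u\<^sub>0 u\<^sub>0) = 0}"
  have bij: "bij_betw f (K \<times> orth W u\<^sub>0) W"
    unfolding f_def by (rule bij_betw_orth_decomp[OF assms])
  have diag: "\<sigma> (f (b, w)) (f (b, w)) + c = 0 \<longleftrightarrow>
      \<sigma> w w + (c + b ^ (q + 1) * \<sigma> u\<^sub>0 u\<^sub>0) = 0"
    if "b \<in> K" "w \<in> orth W u\<^sub>0" for b w
    using form_diag_add_orth[OF that(1)] that(2) by (simp add: f_def orth_def add_ac)
  have image_filter: "{u \<in> f ` A. P u} = f ` {x \<in> A. P (f x)}" for A P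
    by auto
  have "{u \<in> W. \<sigma> u u + c = 0} = f ` {x \<in> K \<times> orth W u\<^sub>0. \<sigma> (f x) (f x) + c = 0}"
    using image_filter[of "K \<times> orth W u\<^sub>0" "\<lambda>u. \<sigma> u u + c = 0"] bij_betw_imp_surj_on[OF bij]
    by simp
  also have "{x \<in> K \<times> orth W u\<^sub>0. \<sigma> (f x) (f x) + c = 0} = ?S"
    by (auto simp: diag)
  finally have "card {u \<in> W. \<sigma> u u + c = 0} = card (f ` ?S)"
    by simp
  also have "\<dots> = card ?S"
    using bij_betw_imp_inj_on[OF bij] by (intro card_image, rule inj_on_subset) auto
  finally show ?thesis
    by (simp add: card_SigmaI)
qed

text \<open>The closed-form count of \<open>card_level_set\<close>, multiplied by \<open>q\<close> to avoid division.\<close>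
definition level_count :: "nat \<Rightarrow> int \<Rightarrow> int \<Rightarrow> 'a \<Rightarrow> int" where
  "level_count r w R c =
    (if c = 0 then w + (-1) ^ r * (int q - 1) * int q ^ r * R
     else if c ^ q = lam * c then w - (-1) ^ r * int q ^ r * R
     else 0)"

lemma sum_level_count_norm:
  assumes a: "a \<noteq> 0" "a ^ q = lam * a"
  shows "(\<Sum>b\<in>K. level_count r w R (c + b ^ (q + 1) * a)) = level_count (Suc r) (int q ^ 2 * w) R c"
proof -
  define Z where "Z = {b \<in> K. c + b ^ (q + 1) * a = 0}"
  define f\<^sub>1 where "f\<^sub>1 = (if c ^ q = lam * c then w - (-1) ^ r * int q ^ r * R else 0)"
  have shift: "(c + b ^ (q + 1) * a) ^ q = lam * (c + b ^ (q + 1) * a) \<longleftrightarrow> c ^ q = lam * c"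
    if "b \<in> K" for b
  proof -
    have "(c + b ^ (q + 1) * a) ^ q = c ^ q + lam * (b ^ (q + 1) * a)"
      using norm_power_q[OF that] a(2) by (simp add: power_q_add power_mult_distrib mult_ac)
    then show ?thesis
      by (simp add: distrib_left)
  qed
  have "level_count r w R (c + b ^ (q + 1) * a) = f\<^sub>1" if "b \<in> K - Z" for b
    using that shift[of b] by (simp add: level_count_def f\<^sub>1_def Z_def)
  moreover have "level_count r w R (c + b ^ (q + 1) * a) = level_count r w R 0" if "b \<in> Z" for b
    using that by (simp add: Z_def)
  moreover have "Z \<subseteq> K"
    by (auto simp: Z_def)
  ultimately have "(\<Sum>b\<in>K. level_count r w R (c + b ^ (q + 1) * a)) =
      int (card (K - Z)) * f\<^sub>1 + int (card Z) * level_count r w R 0"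
    by (simp add: sum.subset_diff[of Z K])
  also have "\<dots> = level_count (Suc r) (int q ^ 2 * w) R c"
  proof -
    have card_diff: "int (card (K - Z)) = int q ^ 2 - int (card Z)"
      using \<open>Z \<subseteq> K\<close> card_subfield_q2 card_mono[of K Z]
      by (simp add: card_Diff_subset of_nat_diff)
    have card_Z: "card Z = (if c = 0 then 1 else if c ^ q = lam * c then q + 1 else 0)"
      using card_norm_equation[OF a, of c] by (simp add: Z_def)
    consider "c = 0" | "c \<noteq> 0" "c ^ q = lam * c" | "c \<noteq> 0" "c ^ q \<noteq> lam * c"
      by blast
    then show ?thesis
    proof cases
      case 1
      then show ?thesis
        using q_ge_2 card_Z
        by (simp add: card_diff f\<^sub>1_def level_count_def power_0_left algebra_simps power2_eq_square)
    next
      case 2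
      then show ?thesis
        using card_Z
        by (simp add: card_diff f\<^sub>1_def level_count_def algebra_simps power2_eq_square)
    next
      case 3
      then show ?thesis
        using card_Z by (simp add: card_diff f\<^sub>1_def level_count_def)
    qed
  qed
  finally show ?thesis .
qed

lemma card_level_set:
  assumes "K_subspace W" "card W = q ^ (2*r) * card (radical \<sigma> W)"
  shows "int q * int (card {u \<in> W. \<sigma> u u + c = 0}) = level_count r (card W) (card (radical \<sigma> W)) c"
  using assms
proof (induction r arbitrary: W c)
  case 0
  then have "radical \<sigma> W = W"
    by (intro card_subset_eq) (auto simp: radical_def)
  then have "\<sigma> u u = 0" if "u \<in> W" for u
    using that unfolding radical_def by blast
  then have "{u \<in> W. \<sigma> u u + c = 0} = (if c = 0 then W else {})"
    by auto
  then show ?case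
    using \<open>radical \<sigma> W = W\<close> by (simp add: level_count_def algebra_simps)
next
  case (Suc r)
  have "0 \<in> radical \<sigma> W"
    using K_subspace_zero[OF Suc.prems(1)] by (simp add: radical_def)
  then have "card (radical \<sigma> W) > 0"
    by (auto simp: card_gt_0_iff)
  moreover have "1 < q ^ (2 * Suc r)"
    using q_ge_2 by (intro one_less_power) auto
  ultimately have "card (radical \<sigma> W) < card W"
    using Suc.prems(2) mult_less_mono1[of 1 "q ^ (2 * Suc r)" "card (radical \<sigma> W)"] by simp
  then obtain v where "v \<in> W" "v \<notin> radical \<sigma> W"
    by (metis card_mono finite subsetI not_le radical_def mem_Collect_eq)
  then obtain u where "u \<in> W" "\<sigma> u v \<noteq> 0"
    by (auto simp: radical_def)
  then obtain u\<^sub>0 where u\<^sub>0: "u\<^sub>0 \<in> W" "\<sigma> u\<^sub>0 u\<^sub>0 \<noteq> 0"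
    using ex_anisotropic[OF Suc.prems(1)] \<open>v \<in> W\<close> by blast
  let ?W' = "orth W u\<^sub>0"
  have card_W: "card W = q ^ 2 * card ?W'"
    using bij_betw_same_card[OF bij_betw_orth_decomp[OF Suc.prems(1) u\<^sub>0]] card_subfield_q2
    by (simp add: card_cartesian_product)
  have radical_W': "radical \<sigma> ?W' = radical \<sigma> W"
    using radical_orth[OF Suc.prems(1) u\<^sub>0] .
  have "card ?W' = q ^ (2*r) * card (radical \<sigma> ?W')"
    using Suc.prems(2) q_ge_2 unfolding card_W radical_W' by (simp add: power_add power2_eq_square)
  note IH = Suc.IH[OF K_subspace_orth[OF Suc.prems(1)] this, unfolded radical_W']
  have "int q * int (card {u \<in> W. \<sigma> u u + c = 0}) =
      (\<Sum>b\<in>K. level_count r (card ?W') (card (radical \<sigma> W)) (c + b ^ (q + 1) * \<sigma> u\<^sub>0 u\<^sub>0))"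
    by (simp add: card_level_set_orth_decomp[OF Suc.prems(1) u\<^sub>0] sum_distrib_left IH)
  also have "\<dots> = level_count (Suc r) (card W) (card (radical \<sigma> W)) c"
    using sum_level_count_norm[OF u\<^sub>0(2) hermitian] card_W by simp
  finally show ?case .
qed

lemma level_count_card_field:
  assumes "r + d = n"
  shows "level_count r (int q ^ (2*n)) (int q ^ (2*d)) c = int q *
    (if c = 0 then int q ^ (2*n-1) + (-1) ^ r * (int q - 1) * int q ^ (2*n-r-1)
     else if c ^ (q - 1) = lam then int q ^ (2*n-1) + (-1) ^ (r + 1) * int q ^ (2*n-r-1)
     else 0)"
proof -
  have "int q ^ (2*n) = int q * int q ^ (2*n-1)"
    using n_pos by (simp flip: power_Suc)
  moreover have "r + 2*d = Suc (2*n-r-1)"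
    using assms n_pos by simp
  then have "int q ^ r * int q ^ (2*d) = int q * int q ^ (2*n-r-1)"
    by (simp flip: power_Suc power_add)
  moreover have "c ^ (q - 1) = lam \<longleftrightarrow> c ^ q = lam * c" if "c \<noteq> 0"
    using that q_ge_2 power_eq_if[of c q] by (auto simp: mult.commute)
  ultimately show ?thesis
    by (auto simp: level_count_def algebra_simps)
qed

end

section \<open>The form \<open>\<sigma>\<^sub>L\<close>\<close>

context field_q2n
begin

lemma K_subspace_ker_L: "K_subspace (ker_L q n c)"
  using q_ge_2
  by (auto simp: K_subspace_def ker_L_def linpoly_add linpoly_mult_subfield)
     (simp add: linpoly_def power_0_left)

lemma card_ker_L:
  fixes c :: "nat \<Rightarrow> 'a"
  shows "card (ker_L q n c) = q ^ (2 * dim_q2 q (ker_L q n c))"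
  and dim_ker_L_le: "dim_q2 q (ker_L q n c) \<le> n"
proof -
  obtain d where d: "card (ker_L q n c) = (q ^ 2) ^ d"
    using card_K_subspace[OF K_subspace_ker_L[of c]] by (auto simp: power_mult)
  have "1 < q ^ 2"
    using q_ge_2 by (intro one_less_power) auto
  then have "dim_q2 q (ker_L q n c) = d"
    unfolding dim_q2_def using d by (auto intro: power_inject_exp[THEN iffD1])
  moreover have "(q ^ 2) ^ d \<le> (q ^ 2) ^ n"
    using d card_mono[of UNIV "ker_L q n c"] card_field by (simp add: power_mult)
  ultimately show "card (ker_L q n c) = q ^ (2 * dim_q2 q (ker_L q n c))"
    and "dim_q2 q (ker_L q n c) \<le> n"
    using d \<open>1 < q ^ 2\<close> by (simp_all add: power_mult)
qed

lemma hermitian_form_sigma_L: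
  fixes c :: "nat \<Rightarrow> 'a"
  assumes "is_hermitian q (sigma_L q n c) lam"
  shows "hermitian_form q n (sigma_L q n c) lam"
proof unfold_locales
  fix u u' v :: 'a and b :: 'a
  show "sigma_L q n c (u + u') v = sigma_L q n c u v + sigma_L q n c u' v"
    by (simp add: sigma_L_def distrib_right trace_rel_add)
  show "sigma_L q n c u (v + v') = sigma_L q n c u v + sigma_L q n c u v'" for v'
    by (simp add: sigma_L_def power_q_add linpoly_add distrib_left trace_rel_add)
  show "sigma_L q n c v u ^ q = lam * sigma_L q n c u v"
    using assms by (simp add: is_hermitian_def)
  show "sigma_L q n c u v \<in> K"
    by (simp add: sigma_L_def trace_rel_in_subfield)
  assume b: "b \<in> K"
  then show "sigma_L q n c (b * u) v = b * sigma_L q n c u v"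
    by (simp add: sigma_L_def mult.assoc trace_rel_mult_subfield)
  have "u * linpoly q n c ((b * v) ^ q) = b ^ q * (u * linpoly q n c (v ^ q))"
    using b by (simp add: power_mult_distrib linpoly_mult_subfield subfield_q2_power_q mult_ac)
  then show "sigma_L q n c u (b * v) = b ^ q * sigma_L q n c u v"
    unfolding sigma_L_def by (simp only: trace_rel_mult_subfield[OF subfield_q2_power_q[OF b]])
qed

lemma card_radical_sigma_L:
  fixes c :: "nat \<Rightarrow> 'a"
  shows "card (radical (sigma_L q n c) UNIV) = card (ker_L q n c)"
proof -
  have "radical (sigma_L q n c) UNIV = (\<lambda>v. v ^ q) -` ker_L q n c"
    using trace_rel_nondegenerate q_ge_2
    by (auto simp: radical_def sigma_L_def ker_L_def trace_rel_def power_0_left)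
  then show ?thesis
    using inj_power_q by (simp add: card_vimage_inj finite_UNIV_inj_surj)
qed

end

theorem corollary4p2:
  fixes q n :: nat and a :: "nat \<Rightarrow> 'a::{field,finite}" and lam c :: 'a
  assumes "prime_power q" and "n > 0"
    and "card (UNIV::'a set) = q ^ (2*n)"
    and "lam \<in> subfield_q2 q"
    and "is_hermitian q (sigma_L q n a) lam"
    and "c \<in> subfield_q2 q"
  defines "r \<equiv> n - dim_q2 q (ker_L q n a)"
  defines "N \<equiv> card {u::'a. trace_rel q n (u * linpoly q n a (u ^ q)) + c = 0}"
  shows "int N =
    (if c = 0 then int q ^ (2*n-1) + (-1) ^ r * (int q - 1) * int q ^ (2*n-r-1)
     else if c ^ (q - 1) = lam then int q ^ (2*n-1) + (-1) ^ (r + 1) * int q ^ (2*n-r-1)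
     else 0)"
proof -
  interpret field_q2n q n "TYPE('a)"
    using assms(1-3) by unfold_locales
  interpret hermitian_form q n "TYPE('a)" "sigma_L q n a" lam
    using hermitian_form_sigma_L[OF assms(5)] .
  define d where "d = dim_q2 q (ker_L q n a)"
  have rd: "r + d = n"
    using dim_ker_L_le[of a] by (simp add: r_def d_def)
  have card_rad: "card (radical (sigma_L q n a) UNIV) = q ^ (2*d)"
    using card_radical_sigma_L card_ker_L by (simp add: d_def)
  have "card (UNIV :: 'a set) = q ^ (2*r) * card (radical (sigma_L q n a) UNIV)"
    using rd by (simp add: card_rad assms(3) flip: power_add add_mult_distrib2)
  from card_level_set[OF _ this, of c]
  have "int q * int N = level_count r (int q ^ (2*n)) (int q ^ (2*d)) c"
    by (simp add: N_def sigma_L_def card_rad assms(3) K_subspace_def)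
  then show ?thesis
    using level_count_card_field[OF rd, of c] q_ge_2 by simp
qed

end
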